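(* For every positive integer $k$ there exists a finite simple graph $G$ such that $\chi(G)-\pi(G)\ge 2^k$.
   Context: An orthogonal vector $d$-coloring of a graph $G$ is an assignment $f:V(G)\to\mathbb{R}^d\setminus\{0\}$ such that $f(u)\perp f(v)$ whenever $uv\in E(G)$; the orthogonal number $\pi(G)$ is the minimum $d$ for which such a coloring exists. $\chi(G)$ is the chromatic number. *)

theory Defs
  imports Complex_Main
begin

definition simple_graph :: "'a set \<Rightarrow> ('a \<Rightarrow> 'a \<Rightarrow> bool) \<Rightarrow> bool" where
  "simple_graph V E \<longleftrightarrow> finite V \<and> (\<forall>u v. E u v \<longrightarrow> u \<in> V \<and> v \<in> V)
     \<and> (\<forall>u v. E u v \<longrightarrow> E v u) \<and> (\<forall>v. \<not> E v v)"

definition proper_coloring :: "'a set \<Rightarrow> ('a \<Rightarrow> 'a \<Rightarrow> bool) \<Rightarrow> nat \<Rightarrow> ('a \<Rightarrow> nat) \<Rightarrow> bool" where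
  "proper_coloring V E k c \<longleftrightarrow> (\<forall>v\<in>V. c v < k) \<and> (\<forall>u\<in>V. \<forall>v\<in>V. E u v \<longrightarrow> c u \<noteq> c v)"

definition chromatic_number :: "'a set \<Rightarrow> ('a \<Rightarrow> 'a \<Rightarrow> bool) \<Rightarrow> nat" where
  "chromatic_number V E = (LEAST k. \<exists>c. proper_coloring V E k c)"

text \<open>Vectors of R^d are represented as functions nat => real supported on {0..<d};
  the standard inner product is the sum over coordinates i < d.\<close>
definition orth_vector_coloring :: "'a set \<Rightarrow> ('a \<Rightarrow> 'a \<Rightarrow> bool) \<Rightarrow> nat \<Rightarrow> ('a \<Rightarrow> nat \<Rightarrow> real) \<Rightarrow> bool" where
  "orth_vector_coloring V E d f \<longleftrightarrow>
     (\<forall>v\<in>V. (\<forall>i\<ge>d. f v i = 0) \<and> (\<exists>i<d. f v i \<noteq> 0))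
     \<and> (\<forall>u\<in>V. \<forall>v\<in>V. E u v \<longrightarrow> (\<Sum>i<d. f u i * f v i) = 0)"

definition orthogonal_number :: "'a set \<Rightarrow> ('a \<Rightarrow> 'a \<Rightarrow> bool) \<Rightarrow> nat" where
  "orthogonal_number V E = (LEAST d. \<exists>f. orth_vector_coloring V E d f)"

end

theory Submission imports Defs begin

text \<open>Take the 18 vectors of the Cabello--Estebaranz--Garc\'ia-Alcaine Kochen--Specker set
  in \<open>\<real>\<^sup>4\<close> and join two of them by an edge when they lie in a common one of its nine
  orthogonal bases. The vectors themselves give \<open>\<pi> \<le> 4\<close>. Each vector lies in exactly two
  bases and an independent set meets every basis at most once, so independent sets have at
  most \<open>\<lfloor>9/2\<rfloor> = 4\<close> vertices, whence \<open>\<chi> \<ge> 18/4\<close>. The join of \<open>m\<close> disjoint copies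
  then has \<open>\<pi> \<le> 4m\<close> (orthogonal direct sum) while its independent sets stay inside one
  copy, so \<open>\<chi> \<ge> 18m/4\<close>; the gap \<open>m/2\<close> exceeds \<open>2\<^sup>k\<close> for \<open>m = 2\<^sup>k\<^sup>+\<^sup>1\<close>.\<close>

definition independent_set :: "('a \<Rightarrow> 'a \<Rightarrow> bool) \<Rightarrow> 'a set \<Rightarrow> bool" where
  "independent_set E S \<longleftrightarrow> (\<forall>u\<in>S. \<forall>v\<in>S. \<not> E u v)"

lemma simple_graph_has_optimal_coloring:
  assumes "simple_graph V E"
  obtains c where "proper_coloring V E (chromatic_number V E) c"
proof -
  have "finite V" and irrefl: "\<And>v. \<not> E v v"
    using assms unfolding simple_graph_def by auto
  then obtain h where h: "bij_betw h V {0..<card V}"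
    using ex_bij_betw_finite_nat by blast
  have "proper_coloring V E (card V) h"
    unfolding proper_coloring_def
  proof (intro conjI ballI impI)
    show "h v < card V" if "v \<in> V" for v
      using h that by (auto dest: bij_betwE)
    show "h u \<noteq> h v" if "u \<in> V" "v \<in> V" "E u v" for u v
      using h that irrefl by (metis bij_betw_iff_bijections)
  qed
  then have "\<exists>k c. proper_coloring V E k c" by blast
  from LeastI_ex[OF this] show ?thesis
    using that unfolding chromatic_number_def by blast
qed

lemma card_le_mult_chromatic_number:
  assumes graph: "simple_graph V E"
    and alpha: "\<And>S. S \<subseteq> V \<Longrightarrow> independent_set E S \<Longrightarrow> card S \<le> a"
  shows "card V \<le> a * chromatic_number V E"
proof -
  obtain c where c: "proper_coloring V E (chromatic_number V E) c"
    using simple_graph_has_optimal_coloring[OF graph] .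
  let ?class = "\<lambda>j. {v \<in> V. c v = j}"
  have "V = (\<Union>j<chromatic_number V E. ?class j)"
    using c unfolding proper_coloring_def by auto
  then have "card V \<le> (\<Sum>j<chromatic_number V E. card (?class j))"
    by (metis card_UN_le finite_lessThan)
  also have "\<dots> \<le> (\<Sum>j<chromatic_number V E. a)"
  proof (intro sum_mono alpha)
    fix j
    show "independent_set E (?class j)"
      using c unfolding proper_coloring_def independent_set_def
      by (metis (mono_tags, lifting) mem_Collect_eq)
  qed auto
  finally show ?thesis by (simp add: mult.commute)
qed

lemma orthogonal_number_le:
  "orth_vector_coloring V E d f \<Longrightarrow> orthogonal_number V E \<le> d"
  unfolding orthogonal_number_def by (blast intro: Least_le)

definition block_graph :: "'i set \<Rightarrow> ('i \<Rightarrow> 'a set) \<Rightarrow> 'a \<Rightarrow> 'a \<Rightarrow> bool" where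
  "block_graph J B a b \<longleftrightarrow> a \<noteq> b \<and> (\<exists>j\<in>J. a \<in> B j \<and> b \<in> B j)"

lemma simple_graph_block_graph:
  "finite V \<Longrightarrow> (\<And>j. j \<in> J \<Longrightarrow> B j \<subseteq> V) \<Longrightarrow> simple_graph V (block_graph J B)"
  unfolding simple_graph_def block_graph_def by blast

lemma independent_set_block_graph_card:
  assumes "finite J" "finite T" "independent_set (block_graph J B) T"
    and deg: "\<And>a. a \<in> T \<Longrightarrow> card {j \<in> J. a \<in> B j} = r"
  shows "r * card T \<le> card J"
proof -
  \<comment> \<open>double counting incidences between \<open>T\<close> and the blocks\<close>
  have "r * card T = (\<Sum>a\<in>T. card {j \<in> J. a \<in> B j})"
    using deg by simp
  also have "\<dots> = (\<Sum>j\<in>J. card {a \<in> T. a \<in> B j})"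
    using assms(1,2) sum.swap_restrict[of T J "\<lambda>_ _. 1::nat" "\<lambda>a j. a \<in> B j"] by simp
  also have "\<dots> \<le> (\<Sum>j\<in>J. 1)"
  proof (intro sum_mono)
    fix j assume "j \<in> J"
    then have "\<forall>a\<in>{a \<in> T. a \<in> B j}. \<forall>b\<in>{a \<in> T. a \<in> B j}. a = b"
      using assms(3) unfolding independent_set_def block_graph_def by blast
    then show "card {a \<in> T. a \<in> B j} \<le> 1"
      using assms(2) by (simp add: card_le_Suc0_iff_eq)
  qed
  finally show ?thesis by simp
qed

text \<open>Vertex \<open>q * n + a\<close> is vertex \<open>a\<close> of the \<open>q\<close>-th copy of a graph on \<open>{..<n}\<close>;
  vertices in different copies are always adjacent.\<close>

definition join_copies :: "nat \<Rightarrow> (nat \<Rightarrow> nat \<Rightarrow> bool) \<Rightarrow> nat \<Rightarrow> nat \<Rightarrow> nat \<Rightarrow> bool" where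
  "join_copies n E m u v \<longleftrightarrow>
     u < n * m \<and> v < n * m \<and> (u div n \<noteq> v div n \<or> E (u mod n) (v mod n))"

text \<open>The \<open>q\<close>-th copy receives the base vectors placed in coordinates \<open>q * d ..< q * d + d\<close>.\<close>

definition join_vectors :: "nat \<Rightarrow> nat \<Rightarrow> (nat \<Rightarrow> nat \<Rightarrow> real) \<Rightarrow> nat \<Rightarrow> nat \<Rightarrow> real" where
  "join_vectors n d f v i = (if i div d = v div n then f (v mod n) (i mod d) else 0)"

lemma join_vertex_bounds:
  fixes v n m :: nat
  assumes "v < n * m"
  shows "v div n < m" and "v mod n < n"
proof -
  have "0 < n"
    using assms by (cases n) auto
  then show "v div n < m" "v mod n < n"
    using assms by (simp_all add: less_mult_imp_div_less mult.commute)
qed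

lemma simple_graph_join_copies:
  assumes "simple_graph {..<n} E"
  shows "simple_graph {..<n * m} (join_copies n E m)"
  using assms unfolding simple_graph_def join_copies_def by auto

lemma independent_set_join_copies:
  assumes S: "S \<subseteq> {..<n * m}" and indep: "independent_set (join_copies n E m) S"
  obtains T where "T \<subseteq> {..<n}" "independent_set E T" "card T = card S"
proof -
  have same_copy: "u div n = v div n" if "u \<in> S" "v \<in> S" for u v
    using indep S that unfolding independent_set_def join_copies_def by blast
  have "inj_on (\<lambda>u. u mod n) S"
    by (rule inj_onI) (metis same_copy div_mod_decomp)
  moreover have "(\<lambda>u. u mod n) ` S \<subseteq> {..<n}"
    using S join_vertex_bounds(2) by blast
  moreover have "independent_set E ((\<lambda>u. u mod n) ` S)"
    using indep S same_copy unfolding independent_set_def join_copies_def by blast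
  ultimately show ?thesis
    using that card_image by blast
qed

lemma card_le_mult_chromatic_number_join_copies:
  assumes graph: "simple_graph {..<n} E"
    and alpha: "\<And>T. T \<subseteq> {..<n} \<Longrightarrow> independent_set E T \<Longrightarrow> card T \<le> a"
  shows "n * m \<le> a * chromatic_number {..<n * m} (join_copies n E m)"
proof -
  have "card S \<le> a"
    if "S \<subseteq> {..<n * m}" "independent_set (join_copies n E m) S" for S
    using independent_set_join_copies[OF that] alpha by metis
  then show ?thesis
    using card_le_mult_chromatic_number[OF simple_graph_join_copies[OF graph]] by simp
qed

lemma sum_join_vectors:
  assumes "u div n < m"
  shows "(\<Sum>i<d * m. join_vectors n d f u i * join_vectors n d f v i)
       = (if u div n = v div n then \<Sum>r<d. f (u mod n) r * f (v mod n) r else 0)"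
proof (cases "u div n = v div n")
  case True
  define q where "q = u div n"
  let ?g = "\<lambda>i. join_vectors n d f u i * join_vectors n d f v i"
  have "q * d + d \<le> d * m"
    using mult_le_mono2[of "Suc q" m d] assms by (simp add: q_def mult.commute)
  then have "{q * d..<q * d + d} \<subseteq> {..<d * m}"
    by auto
  moreover have "i \<in> {q * d..<q * d + d}" if "i div d = q" "i < d * m" for i
  proof -
    have "0 < d"
      using that(2) by (cases d) auto
    then have "i mod d < d"
      by simp
    then show ?thesis
      using that(1) div_mult_mod_eq[of i d] by auto
  qed
  ultimately have "(\<Sum>i<d * m. ?g i) = (\<Sum>i\<in>{q * d..<q * d + d}. ?g i)"
    by (intro sum.mono_neutral_right) (auto simp: join_vectors_def q_def True)
  also have "\<dots> = (\<Sum>r<d. ?g (r + q * d))"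
    using sum.shift_bounds_nat_ivl[of ?g 0 "q * d" d] by (simp add: atLeast0LessThan add.commute)
  also have "\<dots> = (\<Sum>r<d. f (u mod n) r * f (v mod n) r)"
    by (intro sum.cong) (auto simp: join_vectors_def q_def True)
  finally show ?thesis
    using True by simp
next
  case False
  then have "join_vectors n d f u i * join_vectors n d f v i = 0" for i
    by (simp add: join_vectors_def)
  with False show ?thesis
    by (simp del: mult_eq_0_iff)
qed

lemma orth_vector_coloring_join_copies:
  assumes base: "orth_vector_coloring {..<n} E d f"
  shows "orth_vector_coloring {..<n * m} (join_copies n E m) (d * m) (join_vectors n d f)"
  unfolding orth_vector_coloring_def
proof (intro conjI ballI allI impI)
  fix v assume v: "v \<in> {..<n * m}"
  then have copy: "v div n < m" and vertex: "v mod n < n"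
    using join_vertex_bounds by auto
  have "\<exists>r<d. f (v mod n) r \<noteq> 0"
    using base vertex unfolding orth_vector_coloring_def by simp
  then obtain r where r: "r < d" "f (v mod n) r \<noteq> 0"
    by blast
  show "join_vectors n d f v i = 0" if "d * m \<le> i" for i
    using that copy r(1) div_less_iff_less_mult[of d i m]
    by (auto simp: join_vectors_def mult.commute)
  have "v div n * d + r < Suc (v div n) * d"
    using r(1) by simp
  also have "\<dots> \<le> d * m"
    using mult_le_mono1[of "Suc (v div n)" m d] copy by (simp add: mult.commute)
  finally have "v div n * d + r < d * m" .
  moreover have "join_vectors n d f v (v div n * d + r) \<noteq> 0"
    using r by (simp add: join_vectors_def)
  ultimately show "\<exists>i<d * m. join_vectors n d f v i \<noteq> 0"
    by blast
next
  fix u v assume "u \<in> {..<n * m}" "v \<in> {..<n * m}" and edge: "join_copies n E m u v"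
  then have "u div n < m" "u mod n < n" "v mod n < n"
    using join_vertex_bounds by auto
  with edge base show "(\<Sum>i<d * m. join_vectors n d f u i * join_vectors n d f v i) = 0"
    unfolding orth_vector_coloring_def join_copies_def by (auto simp: sum_join_vectors)
qed

text \<open>The 18 vectors of Cabello, Estebaranz and Garc\'ia-Alcaine, and the nine orthogonal
  bases they form, given as lists of indices into \<open>ks_vectors\<close>.\<close>

definition ks_vectors :: "int list list" where
  "ks_vectors =
     [[0,0,0,1], [0,0,1,0], [1,1,0,0], [1,-1,0,0], [0,1,0,0], [1,0,1,0], [1,0,-1,0],
      [1,-1,1,-1], [1,-1,-1,1], [0,0,1,1], [1,1,1,1], [0,1,0,-1], [1,0,0,1], [1,0,0,-1],
      [0,1,-1,0], [1,1,-1,1], [1,1,1,-1], [-1,1,1,1]]"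

definition ks_bases :: "nat list list" where
  "ks_bases =
     [[0,1,2,3], [0,4,5,6], [7,8,2,9], [7,10,6,11], [1,4,12,13], [8,10,13,14],
      [15,16,3,9], [15,17,5,11], [16,17,12,14]]"

definition ks_basis :: "nat \<Rightarrow> nat set" where
  "ks_basis j = set (ks_bases ! j)"

definition ks_graph :: "nat \<Rightarrow> nat \<Rightarrow> bool" where
  "ks_graph = block_graph {..<9} ks_basis"

definition ks_vector :: "nat \<Rightarrow> nat \<Rightarrow> real" where
  "ks_vector a i = (if i < 4 then of_int (ks_vectors ! a ! i) else 0)"

lemma ks_bases_orthogonal_code:
  "list_all (\<lambda>j. list_all (\<lambda>a. list_all (\<lambda>b.
     a = b \<or> (\<Sum>i\<leftarrow>[0..<4]. ks_vectors ! a ! i * ks_vectors ! b ! i) = 0)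
     (ks_bases ! j)) (ks_bases ! j)) [0..<9]"
  by code_simp

lemma ks_vectors_nonzero_code:
  "list_all (\<lambda>a. list_ex (\<lambda>i. ks_vectors ! a ! i \<noteq> 0) [0..<4]) [0..<18]"
  by code_simp

lemma ks_vectors_in_two_bases_code:
  "list_all (\<lambda>a. length (filter (\<lambda>j. a \<in> set (ks_bases ! j)) [0..<9]) = 2) [0..<18]"
  by code_simp

lemma ks_bases_bounded_code:
  "list_all (\<lambda>j. set (ks_bases ! j) \<subseteq> {..<18}) [0..<9]"
  by code_simp

lemma ks_basis_orthogonal:
  assumes "j < 9" "a \<in> ks_basis j" "b \<in> ks_basis j" "a \<noteq> b"
  shows "(\<Sum>i<4. ks_vector a i * ks_vector b i) = 0"
proof -
  have "(\<Sum>i\<leftarrow>[0..<4]. ks_vectors ! a ! i * ks_vectors ! b ! i) = 0"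
    using ks_bases_orthogonal_code assms unfolding list_all_iff ks_basis_def
    by (metis atLeastLessThan_iff le0 set_upt)
  then have "real_of_int (\<Sum>i<4. ks_vectors ! a ! i * ks_vectors ! b ! i) = 0"
    by (simp add: sum_list_sum_nth atLeast0LessThan)
  then show ?thesis
    by (simp add: ks_vector_def)
qed

lemma ks_vector_nonzero:
  assumes "a < 18"
  shows "\<exists>i<4. ks_vector a i \<noteq> 0"
proof -
  obtain i where "i < 4" "ks_vectors ! a ! i \<noteq> 0"
    using ks_vectors_nonzero_code assms unfolding list_all_iff list_ex_iff
    by (metis atLeastLessThan_iff le0 set_upt)
  then show ?thesis
    by (auto simp: ks_vector_def)
qed

lemma ks_vector_in_two_bases:
  assumes "a < 18"
  shows "card {j \<in> {..<9}. a \<in> ks_basis j} = 2"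
proof -
  have "{j \<in> {..<9}. a \<in> ks_basis j} = {j. a \<in> set (ks_bases ! j)} \<inter> set [0..<9]"
    by (auto simp: ks_basis_def)
  also have "card \<dots> = length (filter (\<lambda>j. a \<in> set (ks_bases ! j)) [0..<9])"
    by (rule distinct_length_filter[symmetric]) simp
  also have "\<dots> = 2"
    using ks_vectors_in_two_bases_code assms by (auto simp: list_all_iff)
  finally show ?thesis .
qed

lemma simple_graph_ks_graph: "simple_graph {..<18} ks_graph"
  unfolding ks_graph_def
  by (rule simple_graph_block_graph)
     (use ks_bases_bounded_code in \<open>auto simp: list_all_iff ks_basis_def\<close>)

lemma orth_vector_coloring_ks_graph: "orth_vector_coloring {..<18} ks_graph 4 ks_vector"
  unfolding orth_vector_coloring_def ks_graph_def block_graph_def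
  by (auto simp: ks_vector_nonzero ks_basis_orthogonal) (simp add: ks_vector_def)

lemma independent_set_ks_graph_card:
  assumes "T \<subseteq> {..<18}" "independent_set ks_graph T"
  shows "card T \<le> 4"
proof -
  have "2 * card T \<le> card {..<9::nat}"
    using assms ks_vector_in_two_bases
    by (intro independent_set_block_graph_card[of _ _ ks_basis])
       (auto simp: ks_graph_def finite_subset)
  then show ?thesis
    by simp
qed

theorem mainTheorem4:
  fixes k :: nat
  assumes "k \<ge> 1"
  shows "\<exists>(V :: nat set) E. simple_graph V E \<and>
           int (chromatic_number V E) - int (orthogonal_number V E) \<ge> 2 ^ k"
proof (intro exI conjI)
  define m :: nat where "m = 2 ^ (k + 1)"
  let ?G = "join_copies 18 ks_graph m"
  show "simple_graph {..<18 * m} ?G"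
    using simple_graph_join_copies[OF simple_graph_ks_graph] .
  have "18 * m \<le> 4 * chromatic_number {..<18 * m} ?G"
    using card_le_mult_chromatic_number_join_copies[OF simple_graph_ks_graph]
      independent_set_ks_graph_card by blast
  moreover have "orthogonal_number {..<18 * m} ?G \<le> 4 * m"
    using orthogonal_number_le[OF orth_vector_coloring_join_copies[OF orth_vector_coloring_ks_graph]] .
  moreover have "int m = 2 * 2 ^ k"
    by (simp add: m_def)
  ultimately show "int (chromatic_number {..<18 * m} ?G) - int (orthogonal_number {..<18 * m} ?G) \<ge> 2 ^ k"
    by linarith
qed

end
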